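(* Every implicational formula is classically equivalent (i.e. has the same truth value under every Boolean valuation) to an implicational formula of order at most three.
   Context: Implicational formulas are built from propositional variables using $\to$ only. Order: an atom has order $0$, and $r(\sigma\to\tau)=\max(r(\tau),r(\sigma)+1)$. *)

theory Defs
  imports Main
begin

datatype 'a ifm = Var 'a | Imp "'a ifm" "'a ifm"

fun ord :: "'a ifm \<Rightarrow> nat" where
  "ord (Var p) = 0"
| "ord (Imp s t) = max (ord t) (ord s + 1)"

fun eval :: "('a \<Rightarrow> bool) \<Rightarrow> 'a ifm \<Rightarrow> bool" where
  "eval v (Var p) = v p"
| "eval v (Imp s t) = (eval v s \<longrightarrow> eval v t)"

end

theory Submission
  imports Defs
begin

text \<open>A formula is true whenever its final conclusion q is, so it is equivalent to
  q or the disjunction of the descriptions of its models S restricted to its variables.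
  A state description is expressed without disjunction as the negation of the order-2
  formula  l1 \<rightarrow> ... \<rightarrow> ln \<rightarrow> q,  with li = pi for pi in S and li = (pi \<rightarrow> q) otherwise:
  when q is false it fails exactly at S. Implying q from all these formulas gives an
  equivalent formula of order 3.\<close>

fun vars :: "'a ifm \<Rightarrow> 'a list" where
  "vars (Var p) = [p]"
| "vars (Imp s t) = vars s @ vars t"

fun concl :: "'a ifm \<Rightarrow> 'a" where
  "concl (Var p) = p"
| "concl (Imp s t) = concl t"

lemma eval_if_concl: "v (concl \<phi>) \<Longrightarrow> eval v \<phi>"
  by (induction \<phi>) auto

lemma eval_cong: "(\<And>p. p \<in> set (vars \<phi>) \<Longrightarrow> v p = w p) \<Longrightarrow> eval v \<phi> = eval w \<phi>"
  by (induction \<phi>) auto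

lemma eval_foldr_Imp: "eval v (foldr Imp hs c) \<longleftrightarrow> (\<forall>h\<in>set hs. eval v h) \<longrightarrow> eval v c"
  by (induction hs) auto

lemma ord_foldr_Imp_le:
  "(\<And>h. h \<in> set hs \<Longrightarrow> ord h < n) \<Longrightarrow> ord c \<le> n \<Longrightarrow> ord (foldr Imp hs c) \<le> n"
  by (induction hs) (simp_all add: Suc_le_eq)

lemma ex_subseqs_agree: "\<exists>ys\<in>set (subseqs xs). \<forall>p\<in>set xs. v p = (p \<in> set ys)"
proof -
  have "{p\<in>set xs. v p} \<in> set ` set (subseqs xs)"
    by (rule subset_subseqs) auto
  then obtain ys where "ys \<in> set (subseqs xs)" "set ys = {p\<in>set xs. v p}"
    by blast
  then show ?thesis by auto
qed

definition state_refuter :: "'a list \<Rightarrow> 'a \<Rightarrow> 'a list \<Rightarrow> 'a ifm" where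
  "state_refuter xs q ys =
     foldr Imp (map (\<lambda>p. if p \<in> set ys then Var p else Imp (Var p) (Var q)) xs) (Var q)"

lemma ord_state_refuter: "ord (state_refuter xs q ys) \<le> 2"
  unfolding state_refuter_def by (rule ord_foldr_Imp_le) auto

lemma eval_state_refuter:
  "eval v (state_refuter xs q ys) \<longleftrightarrow> v q \<or> \<not> (\<forall>p\<in>set xs. v p = (p \<in> set ys))"
  unfolding state_refuter_def by (induction xs) auto

definition order3_form :: "'a ifm \<Rightarrow> 'a ifm" where
  "order3_form \<phi> =
     foldr Imp
       (map (state_refuter (vars \<phi>) (concl \<phi>))
          (filter (\<lambda>ys. eval (\<lambda>p. p \<in> set ys) \<phi>) (subseqs (vars \<phi>))))
       (Var (concl \<phi>))"

lemma ord_order3_form: "ord (order3_form \<phi>) \<le> 3"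
  unfolding order3_form_def
  by (intro ord_foldr_Imp_le) (auto intro: le_less_trans[OF ord_state_refuter])

lemma eval_order3_form: "eval v (order3_form \<phi>) = eval v \<phi>"
proof -
  let ?xs = "vars \<phi>"
  let ?agree = "\<lambda>ys. \<forall>p\<in>set ?xs. v p = (p \<in> set ys)"
  have agree_eval: "eval (\<lambda>p. p \<in> set ys) \<phi> = eval v \<phi>" if "?agree ys" for ys
    using that by (intro eval_cong) auto
  have "eval v (order3_form \<phi>) \<longleftrightarrow>
          v (concl \<phi>) \<or> (\<exists>ys\<in>set (subseqs ?xs). eval (\<lambda>p. p \<in> set ys) \<phi> \<and> ?agree ys)"
    unfolding order3_form_def eval_foldr_Imp by (auto simp: eval_state_refuter)
  also have "\<dots> \<longleftrightarrow> v (concl \<phi>) \<or> eval v \<phi>"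
    using agree_eval ex_subseqs_agree[of ?xs v] by blast
  also have "\<dots> \<longleftrightarrow> eval v \<phi>"
    using eval_if_concl by blast
  finally show ?thesis .
qed

theorem proposition4p3:
  fixes \<phi> :: "'a ifm"
  shows "\<exists>\<psi> :: 'a ifm. ord \<psi> \<le> 3 \<and> (\<forall>v. eval v \<psi> = eval v \<phi>)"
  using ord_order3_form eval_order3_form by blast

end
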